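(* Let $\pi$ be a prior satisfying conditions (MD) and (MZ) below, and suppose moreover that the function $f$ with $\pi_\eta(\eta\mid\theta)=f(\eta'W(P)\eta\mid\theta,W(P))$ satisfies: $f(u\mid\theta,W(P))=f(u)$ for all $(W(P),\theta)$, where $f$ is strictly positive, continuous and non-increasing in $u\ge0$, and $\lim_{u\to\infty}f(au)/f(u)=0$ for every $a>1$. (MD): the conditional prior of $(Y(P),\theta)$ given $(X(P),W(P))$ is absolutely continuous with full support and a continuous density for all $(X(P),W(P))$, and for all $P,\theta$, $\pi(\theta\mid P)=h(Q_W(\theta;P),W(P),\theta)c(P)$ for some non-negative $h$ twice continuously differentiable in its first argument and continuously differentiable in $\theta$, with $c(P)$ a normalizing constant. (MZ): $\pi_\eta(\eta\mid\theta)=\pi(\eta\mid\theta,W(P),X(P))$ is strictly positive and twice continuously differentiable in $(\eta,\theta)$, does not depend on $X(P)$, satisfies $\int\eta\,\pi_\eta(\eta\mid\theta)d\eta=0$, and $(Y(P),X(P))$ can be varied freely while holding $W(P)$ fixed. For $c>0$ and any continuous density $\pi_\theta$ on $\mathbb R^p$ with $\pi_\theta(\theta_W(P))>0$, define \[ \pi_c(\theta\mid P)=\frac{\pi_\theta(\theta)\,f\bigl(\tfrac1cQ_W(\theta;P)\bigr)}{\int\pi_\theta(\vartheta)\,f\bigl(\tfrac1cQ_W(\vartheta;P)\bigr)d\vartheta}. \] Then $\pi_c(\cdot\mid P)$ concentrates on $\theta_W(P)$ as $c\to0$: for every $\varepsilon>0$, with $B_\varepsilon(\theta_W(P))=\{\theta:\|\theta-\theta_W(P)\|<\varepsilon\}$,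 \[ \lim_{c\to0}\int1\{\theta\notin B_\varepsilon(\theta_W(P))\}\,d\pi_c(\theta\mid P)=0. \]
   Context: Let $\mathcal D$ be a set and $\mathcal P$ a set of probability distributions on $\mathcal D$; $P\in\mathcal P$ is observed. Fix integers $k>p\ge1$. Let $Y:\mathcal P\to\mathbb R^k$ and $X:\mathcal P\to\mathbb R^{k\times p}$ be known functions with $X(P)$ of full column rank, and $W(P)$ a known symmetric positive definite $k\times k$ matrix. Define $g(\theta;P)=Y(P)-X(P)\theta$, $Q_W(\theta;P)=g(\theta;P)'W(P)g(\theta;P)$, and the pseudo-true value $\theta_W(P)=\arg\min_\theta Q_W(\theta;P)=(X(P)'W(P)X(P))^{-1}X(P)'W(P)Y(P)$. A prior $\pi$ is a joint distribution over $(P,\theta)\in\mathcal P\times\mathbb R^p$, with $\eta=g(\theta;P)$; $\pi(\theta\mid P)$ is the posterior density of $\theta$. Under (MD) and (MZ) the conditional prior density of $\eta$ has the form $\pi_\eta(\eta\mid\theta)=f(\eta'W(P)\eta\mid\theta,W(P))$. The posterior $\pi_c$ corresponds to the scale family of misspecification priors $\pi_{\eta,c}(\eta\mid\theta)\propto f(\tfrac1c\eta'W(P)\eta)$ with prior $\pi_\theta$ on $\theta$. *)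

theory Defs
  imports "HOL-Analysis.Analysis"
begin

definition g_mom :: "real^'k \<Rightarrow> real^'p^'k \<Rightarrow> real^'p \<Rightarrow> real^'k" where
  "g_mom Y X \<theta> = Y - X *v \<theta>"

definition Q_W :: "real^'k \<Rightarrow> real^'p^'k \<Rightarrow> real^'k^'k \<Rightarrow> real^'p \<Rightarrow> real" where
  "Q_W Y X W \<theta> = g_mom Y X \<theta> \<bullet> (W *v g_mom Y X \<theta>)"

definition theta_W :: "real^'k \<Rightarrow> real^'p^'k \<Rightarrow> real^'k^'k \<Rightarrow> real^'p" where
  "theta_W Y X W = matrix_inv (transpose X ** W ** X) *v (transpose X ** W *v Y)"

definition sym_posdef :: "real^'k^'k \<Rightarrow> bool" where
  "sym_posdef W \<longleftrightarrow> transpose W = W \<and> (\<forall>v. v \<noteq> 0 \<longrightarrow> v \<bullet> (W *v v) > 0)"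

definition pi_c :: "(real \<Rightarrow> real) \<Rightarrow> (real^'p \<Rightarrow> real) \<Rightarrow> real^'k \<Rightarrow> real^'p^'k \<Rightarrow> real^'k^'k
                    \<Rightarrow> real \<Rightarrow> real^'p \<Rightarrow> real" where
  "pi_c f \<pi>\<theta> Y X W c \<theta> =
     \<pi>\<theta> \<theta> * f (Q_W Y X W \<theta> / c) /
     (\<integral>t. \<pi>\<theta> t * f (Q_W Y X W t / c) \<partial>lborel)"

end

(* Around theta_W the criterion is a positive definite quadratic form,
   Q_W (theta_W + h) = Q_W theta_W + h' (X' W X) h,  so outside the eps-ball it exceeds its
   minimum q by some m > 0.  On a small ball around theta_W the prior is at least half its
   positive value there and Q_W <= q + m/2, so the normaliser is at least a constant times
   f ((q + m/2) / c), while the unnormalised mass outside the eps-ball is at most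
   f ((q + m) / c) times the prior mass.  The tail condition on f, with the ratio
   (q + m) / (q + m/2) > 1 and u = (q + m/2) / c tending to infinity, sends the quotient to 0. *)

theory Submission
  imports Defs
begin

lemma inner_transpose_matrix_vector:
  "(x::real^'n) \<bullet> (transpose M *v y) = (M *v x) \<bullet> (y::real^'m)"
  by (metis dot_lmul_matrix inner_commute transpose_matrix_vector)

lemma gram_quadratic_form:
  "h \<bullet> ((transpose X ** W ** X) *v h) = (X *v h) \<bullet> (W *v (X *v (h::real^'p)))"
proof -
  have "(transpose X ** W ** X) *v h = transpose X *v (W *v (X *v h))"
    by (simp add: matrix_vector_mul_assoc matrix_mul_assoc)
  then show ?thesis
    by (simp only: inner_transpose_matrix_vector)
qed

lemma sym_posdef_gram:
  fixes X :: "real^'p^'k"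
  assumes "rank X = CARD('p)" and "sym_posdef W"
  shows "sym_posdef (transpose X ** W ** X)"
  unfolding sym_posdef_def
proof (intro conjI allI impI)
  show "transpose (transpose X ** W ** X) = transpose X ** W ** X"
    using assms(2) by (simp add: sym_posdef_def matrix_transpose_mul matrix_mul_assoc)
next
  fix h :: "real^'p" assume "h \<noteq> 0"
  then have "X *v h \<noteq> 0"
    using full_rank_injective[THEN iffD1, OF assms(1)] by (metis injD matrix_vector_mult_0_right)
  then show "h \<bullet> ((transpose X ** W ** X) *v h) > 0"
    using assms(2) by (simp add: gram_quadratic_form sym_posdef_def)
qed

lemma sym_posdef_invertible:
  assumes "sym_posdef A"
  shows "invertible A"
proof -
  have "\<forall>h. A *v h = 0 \<longrightarrow> h = 0"
    using assms unfolding sym_posdef_def by (metis inner_zero_right less_irrefl)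
  then show ?thesis
    by (simp add: invertible_left_inverse matrix_left_invertible_ker)
qed

lemma matrix_inv_right:
  assumes "invertible A"
  shows "A ** matrix_inv A = mat 1"
  using assms unfolding invertible_def matrix_inv_def by (rule someI2_ex) auto

lemma theta_W_normal_equation:
  fixes X :: "real^'p^'k"
  assumes "rank X = CARD('p)" and "sym_posdef W"
  shows "(transpose X ** W ** X) *v theta_W Y X W = (transpose X ** W) *v Y"
  using matrix_inv_right[OF sym_posdef_invertible[OF sym_posdef_gram[OF assms]]]
  unfolding theta_W_def by (metis matrix_vector_mul_assoc matrix_vector_mul_lid)

lemma Q_W_theta_W_add:
  fixes X :: "real^'p^'k"
  assumes "rank X = CARD('p)" and "sym_posdef W"
  shows "Q_W Y X W (theta_W Y X W + h)
           = Q_W Y X W (theta_W Y X W) + h \<bullet> ((transpose X ** W ** X) *v h)"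
proof -
  define r where "r = g_mom Y X (theta_W Y X W)"
  have W_sym: "transpose W = W"
    using assms(2) by (simp add: sym_posdef_def)
  have "transpose X *v (W *v r) = (transpose X ** W) *v Y - (transpose X ** W ** X) *v theta_W Y X W"
    unfolding r_def g_mom_def
    by (simp add: matrix_vector_mul_assoc matrix_mul_assoc matrix_vector_mult_diff_distrib)
  then have residual_orth: "(X *v h) \<bullet> (W *v r) = 0"
    by (simp add: theta_W_normal_equation[OF assms] flip: inner_transpose_matrix_vector)
  have "r \<bullet> (W *v (X *v h)) = (X *v h) \<bullet> (W *v r)"
    by (metis W_sym inner_commute inner_transpose_matrix_vector)
  moreover have "g_mom Y X (theta_W Y X W + h) = r - X *v h"
    unfolding g_mom_def r_def by (simp add: matrix_vector_right_distrib algebra_simps)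
  ultimately show ?thesis
    using residual_orth
    by (simp add: Q_W_def r_def gram_quadratic_form matrix_vector_mult_diff_distrib
        inner_diff_left inner_diff_right)
qed

lemma sym_posdef_coercive:
  assumes "sym_posdef (A::real^'n^'n)"
  obtains \<mu> where "\<mu> > 0" and "\<And>h. \<mu> * (norm h)\<^sup>2 \<le> h \<bullet> (A *v h)"
proof -
  let ?q = "\<lambda>h. h \<bullet> (A *v h)"
  have q_pos: "?q h > 0" if "h \<noteq> 0" for h
    using assms that by (simp add: sym_posdef_def)
  have "continuous_on (sphere 0 1) ?q"
    by (intro continuous_intros bounded_linear.continuous_on[OF matrix_vector_mul_bounded_linear])
  moreover have "sphere (0::real^'n) 1 \<noteq> {}"
    using vector_choose_size[of 1] by force
  ultimately obtain u where u: "u \<in> sphere 0 1" and u_min: "\<And>v. v \<in> sphere 0 1 \<Longrightarrow> ?q u \<le> ?q v"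
    using continuous_attains_inf[OF compact_sphere] by blast
  have "?q u * (norm h)\<^sup>2 \<le> ?q h" for h
  proof (cases "h = 0")
    case False
    define v where "v = (1 / norm h) *\<^sub>R h"
    have "h = norm h *\<^sub>R v"
      using False by (simp add: v_def)
    then have "?q h = (norm h)\<^sup>2 * ?q v"
      by (metis (no_types, lifting) inner_scaleR_left inner_scaleR_right
          matrix_vector_mult_scaleR mult.assoc power2_eq_square)
    moreover have "?q u \<le> ?q v"
      using False by (intro u_min) (simp add: v_def)
    ultimately show ?thesis
      by (simp add: mult.commute mult_right_mono)
  qed simp
  moreover have "?q u > 0"
    using u by (intro q_pos) auto
  ultimately show ?thesis
    using that by blast
qed

lemma Q_W_gap_outside_ball:
  fixes X :: "real^'p^'k"
  assumes "rank X = CARD('p)" and "sym_posdef W" and "\<epsilon> > 0"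
  obtains m where "m > 0"
    and "\<And>\<theta>. \<theta> \<in> - ball (theta_W Y X W) \<epsilon> \<Longrightarrow> Q_W Y X W (theta_W Y X W) + m \<le> Q_W Y X W \<theta>"
proof -
  obtain \<mu> where \<mu>: "\<mu> > 0" "\<And>h. \<mu> * (norm h)\<^sup>2 \<le> h \<bullet> ((transpose X ** W ** X) *v h)"
    using sym_posdef_coercive[OF sym_posdef_gram[OF assms(1,2)]] by blast
  have "Q_W Y X W (theta_W Y X W) + \<mu> * \<epsilon>\<^sup>2 \<le> Q_W Y X W \<theta>"
    if "\<theta> \<in> - ball (theta_W Y X W) \<epsilon>" for \<theta>
  proof -
    let ?h = "\<theta> - theta_W Y X W"
    have "\<epsilon> \<le> norm ?h"
      using that by (simp add: dist_norm norm_minus_commute)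
    then have "\<mu> * \<epsilon>\<^sup>2 \<le> \<mu> * (norm ?h)\<^sup>2"
      using \<mu>(1) assms(3) by (simp add: power_mono)
    also have "\<dots> \<le> ?h \<bullet> ((transpose X ** W ** X) *v ?h)"
      by (rule \<mu>(2))
    finally show ?thesis
      using Q_W_theta_W_add[OF assms(1,2), of Y ?h] by simp
  qed
  moreover have "\<mu> * \<epsilon>\<^sup>2 > 0"
    using \<mu>(1) assms(3) by simp
  ultimately show ?thesis
    using that by blast
qed

lemma Q_W_nonneg:
  assumes "sym_posdef W"
  shows "Q_W Y X W \<theta> \<ge> 0"
  using assms unfolding Q_W_def sym_posdef_def
  by (cases "g_mom Y X \<theta> = 0") (auto intro: less_imp_le)

lemma continuous_on_Q_W: "continuous_on UNIV (Q_W Y X W)"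
  unfolding Q_W_def[abs_def] g_mom_def
  by (intro continuous_intros bounded_linear.continuous_on[OF matrix_vector_mul_bounded_linear])

lemma tail_ratio_tendsto_0_at_right:
  fixes f :: "real \<Rightarrow> real"
  assumes f_tail: "\<And>r. r > 1 \<Longrightarrow> ((\<lambda>u. f (r * u) / f u) \<longlongrightarrow> 0) at_top"
    and "0 < a" and "a < b"
  shows "((\<lambda>c. f (b / c) / f (a / c)) \<longlongrightarrow> 0) (at_right 0)"
proof -
  have "filterlim (\<lambda>c. a / c) at_top (at_right 0)"
    using filterlim_tendsto_pos_mult_at_top[OF tendsto_const \<open>0 < a\<close> filterlim_inverse_at_top_right]
    by (simp add: divide_inverse)
  from filterlim_compose[OF f_tail this, of "b / a"]
  have "((\<lambda>c. f (b / a * (a / c)) / f (a / c)) \<longlongrightarrow> 0) (at_right 0)"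
    using assms(2,3) by simp
  then show ?thesis
    using \<open>0 < a\<close> by simp
qed

locale scaled_posterior =
  fixes f :: "real \<Rightarrow> real" and \<pi> :: "'a::euclidean_space \<Rightarrow> real" and Q :: "'a \<Rightarrow> real"
  assumes f_pos: "\<And>u. 0 \<le> u \<Longrightarrow> 0 < f u"
    and f_cont: "continuous_on {0..} f"
    and f_antimono: "\<And>u v. 0 \<le> u \<Longrightarrow> u \<le> v \<Longrightarrow> f v \<le> f u"
    and \<pi>_cont: "continuous_on UNIV \<pi>"
    and \<pi>_nonneg: "\<And>\<theta>. 0 \<le> \<pi> \<theta>"
    and \<pi>_integrable: "integrable lborel \<pi>"
    and Q_cont: "continuous_on UNIV Q"
    and Q_nonneg: "\<And>\<theta>. 0 \<le> Q \<theta>"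
begin

definition weight :: "real \<Rightarrow> 'a \<Rightarrow> real" where
  "weight c \<theta> = \<pi> \<theta> * f (Q \<theta> / c)"

definition posterior :: "real \<Rightarrow> 'a \<Rightarrow> real" where
  "posterior c \<theta> = weight c \<theta> / (\<integral>t. weight c t \<partial>lborel)"

lemma weight_nonneg: "0 < c \<Longrightarrow> 0 \<le> weight c \<theta>"
  using f_pos[of "Q \<theta> / c"] \<pi>_nonneg[of \<theta>] Q_nonneg[of \<theta>] by (simp add: weight_def)

lemma weight_le:
  assumes "0 < c" and "0 \<le> b" and "b \<le> Q \<theta>"
  shows "weight c \<theta> \<le> \<pi> \<theta> * f (b / c)"
  unfolding weight_def using assms
  by (intro mult_left_mono f_antimono \<pi>_nonneg divide_right_mono) auto

lemma weight_ge:
  assumes "0 < c" and "Q \<theta> \<le> a" and "p \<le> \<pi> \<theta>" and "0 \<le> p"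
  shows "p * f (a / c) \<le> weight c \<theta>"
  unfolding weight_def using assms Q_nonneg[of \<theta>] f_pos[of "a / c"]
  by (intro mult_mono f_antimono divide_right_mono) auto

lemma integrable_weight:
  assumes "0 < c"
  shows "integrable lborel (weight c)"
proof (rule Bochner_Integration.integrable_bound)
  show "integrable lborel (\<lambda>\<theta>. \<pi> \<theta> * f 0)"
    using \<pi>_integrable by simp
  have "continuous_on UNIV (\<lambda>\<theta>. f (Q \<theta> / c))"
    using assms Q_nonneg
    by (intro continuous_on_compose2[OF f_cont] continuous_intros Q_cont) auto
  then have "continuous_on UNIV (weight c)"
    unfolding weight_def[abs_def] by (intro continuous_intros \<pi>_cont)
  then show "weight c \<in> borel_measurable lborel"
    using borel_measurable_continuous_onI by simp
  show "AE \<theta> in lborel. norm (weight c \<theta>) \<le> norm (\<pi> \<theta> * f 0)"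
    using weight_nonneg[OF assms] weight_le[OF assms order_refl Q_nonneg] \<pi>_nonneg f_pos[of 0]
    by auto
qed

lemma integral_weight_ge:
  assumes "0 < c" and "B \<in> sets lborel" and "emeasure lborel B < \<infinity>" and "0 \<le> p"
    and near: "\<And>\<theta>. \<theta> \<in> B \<Longrightarrow> Q \<theta> \<le> a \<and> p \<le> \<pi> \<theta>"
  shows "p * measure lborel B * f (a / c) \<le> (\<integral>\<theta>. weight c \<theta> \<partial>lborel)"
proof -
  have "p * measure lborel B * f (a / c) = (\<integral>\<theta>. indicator B \<theta> * (p * f (a / c)) \<partial>lborel)"
    by simp
  also have "\<dots> \<le> (\<integral>\<theta>. weight c \<theta> \<partial>lborel)"
  proof (rule integral_mono)
    show "integrable lborel (\<lambda>\<theta>. indicator B \<theta> * (p * f (a / c)))"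
      using assms(2,3) by (intro integrable_mult_left integrable_real_indicator)
    show "integrable lborel (weight c)"
      using integrable_weight[OF assms(1)] .
    show "indicator B \<theta> * (p * f (a / c)) \<le> weight c \<theta>" for \<theta>
      using weight_ge[OF assms(1) _ _ assms(4)] near weight_nonneg[OF assms(1)]
      by (cases "\<theta> \<in> B") auto
  qed
  finally show ?thesis .
qed

lemma integral_weight_outside_le:
  assumes "0 < c" and "S \<in> sets lborel" and "0 \<le> b" and far: "\<And>\<theta>. \<theta> \<in> S \<Longrightarrow> b \<le> Q \<theta>"
  shows "(\<integral>\<theta>. indicator S \<theta> * weight c \<theta> \<partial>lborel) \<le> f (b / c) * (\<integral>\<theta>. \<pi> \<theta> \<partial>lborel)"
proof -
  have "(\<integral>\<theta>. indicator S \<theta> * weight c \<theta> \<partial>lborel) \<le> (\<integral>\<theta>. \<pi> \<theta> * f (b / c) \<partial>lborel)"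
  proof (rule integral_mono)
    show "integrable lborel (\<lambda>\<theta>. indicator S \<theta> * weight c \<theta>)"
      using integrable_mult_indicator[OF assms(2) integrable_weight[OF assms(1)]] by simp
    show "integrable lborel (\<lambda>\<theta>. \<pi> \<theta> * f (b / c))"
      using \<pi>_integrable by simp
    show "indicator S \<theta> * weight c \<theta> \<le> \<pi> \<theta> * f (b / c)" for \<theta>
      using weight_le[OF assms(1,3) far] \<pi>_nonneg[of \<theta>] f_pos[of "b / c"] assms(1,3)
      by (cases "\<theta> \<in> S") auto
  qed
  then show ?thesis
    by (simp add: mult.commute)
qed

lemma posterior_mass_bounds:
  assumes "0 < c" and "S \<in> sets lborel" and "0 \<le> b" and far: "\<And>\<theta>. \<theta> \<in> S \<Longrightarrow> b \<le> Q \<theta>"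
    and "B \<in> sets lborel" and "emeasure lborel B < \<infinity>" and "0 < measure lborel B"
    and "0 < p" and "0 \<le> a" and near: "\<And>\<theta>. \<theta> \<in> B \<Longrightarrow> Q \<theta> \<le> a \<and> p \<le> \<pi> \<theta>"
  defines "mass \<equiv> \<integral>\<theta>. indicator S \<theta> * posterior c \<theta> \<partial>lborel"
  shows "0 \<le> mass"
    and "mass \<le> f (b / c) / f (a / c) * ((\<integral>\<theta>. \<pi> \<theta> \<partial>lborel) / (p * measure lborel B))"
proof -
  define Z where "Z = (\<integral>\<theta>. weight c \<theta> \<partial>lborel)"
  define N where "N = (\<integral>\<theta>. indicator S \<theta> * weight c \<theta> \<partial>lborel)"
  have fa_pos: "0 < f (a / c)"
    using assms(1,9) by (intro f_pos) simp
  have K_pos: "0 < p * measure lborel B"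
    using assms(7,8) by simp
  have Z_ge: "p * measure lborel B * f (a / c) \<le> Z"
    unfolding Z_def using assms(1,5,6,8) near by (intro integral_weight_ge) auto
  then have Z_pos: "0 < Z"
    using K_pos fa_pos by (meson mult_pos_pos order_less_le_trans)
  have mass_eq: "mass = N / Z"
    unfolding mass_def N_def Z_def posterior_def by (simp flip: integral_divide_zero)
  have N_nonneg: "0 \<le> N"
    unfolding N_def using weight_nonneg[OF assms(1)] by (intro integral_nonneg_AE) auto
  have N_le: "N \<le> f (b / c) * (\<integral>\<theta>. \<pi> \<theta> \<partial>lborel)"
    unfolding N_def using assms(1-3) far by (rule integral_weight_outside_le)
  show "0 \<le> mass"
    unfolding mass_eq using N_nonneg Z_pos by simp
  have "mass \<le> f (b / c) * (\<integral>\<theta>. \<pi> \<theta> \<partial>lborel) / Z"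
    unfolding mass_eq using N_le Z_pos by (simp add: divide_right_mono)
  also have "\<dots> \<le> f (b / c) * (\<integral>\<theta>. \<pi> \<theta> \<partial>lborel) / (p * measure lborel B * f (a / c))"
    using Z_ge Z_pos K_pos fa_pos N_nonneg N_le by (intro divide_left_mono) auto
  finally show "mass \<le> f (b / c) / f (a / c) * ((\<integral>\<theta>. \<pi> \<theta> \<partial>lborel) / (p * measure lborel B))"
    by (simp add: field_simps)
qed

lemma ball_where_Q_le_and_prior_ge:
  assumes "0 < \<pi> t0" and "0 < m"
  obtains \<delta> where "0 < \<delta>"
    and "\<And>\<theta>. \<theta> \<in> ball t0 \<delta> \<Longrightarrow> Q \<theta> \<le> Q t0 + m \<and> \<pi> t0 / 2 \<le> \<pi> \<theta>"
proof -
  have "isCont Q t0" "isCont \<pi> t0"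
    using Q_cont \<pi>_cont by (simp_all add: continuous_on_eq_continuous_at)
  then have "(Q \<longlongrightarrow> Q t0) (nhds t0)" "(\<pi> \<longlongrightarrow> \<pi> t0) (nhds t0)"
    by (simp_all add: isCont_def tendsto_at_iff_tendsto_nhds)
  then have "\<forall>\<^sub>F \<theta> in nhds t0. Q \<theta> < Q t0 + m \<and> \<pi> t0 / 2 < \<pi> \<theta>"
    using assms by (intro eventually_conj order_tendstoD) auto
  then show ?thesis
    using that unfolding eventually_nhds_metric by (force simp: dist_commute)
qed

lemma posterior_mass_tendsto_0:
  assumes f_tail: "\<And>r. r > 1 \<Longrightarrow> ((\<lambda>u. f (r * u) / f u) \<longlongrightarrow> 0) at_top"
    and "0 < \<pi> t0" and "S \<in> sets lborel"
    and "0 < m" and gap: "\<And>\<theta>. \<theta> \<in> S \<Longrightarrow> Q t0 + m \<le> Q \<theta>"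
  shows "((\<lambda>c. \<integral>\<theta>. indicator S \<theta> * posterior c \<theta> \<partial>lborel) \<longlongrightarrow> 0) (at_right 0)"
proof -
  define a where "a = Q t0 + m / 2"
  define b where "b = Q t0 + m"
  have ab: "0 < a" "a < b"
    using Q_nonneg[of t0] \<open>0 < m\<close> by (simp_all add: a_def b_def)
  obtain \<delta> where "0 < \<delta>" and near: "\<And>\<theta>. \<theta> \<in> ball t0 \<delta> \<Longrightarrow> Q \<theta> \<le> a \<and> \<pi> t0 / 2 \<le> \<pi> \<theta>"
    using ball_where_Q_le_and_prior_ge[OF \<open>0 < \<pi> t0\<close>, of "m / 2"] \<open>0 < m\<close> unfolding a_def by auto
  have b: "0 \<le> b" "\<And>\<theta>. \<theta> \<in> S \<Longrightarrow> b \<le> Q \<theta>"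
    using ab gap by (auto simp: b_def)
  have ball: "ball t0 \<delta> \<in> sets lborel" "emeasure lborel (ball t0 \<delta>) < \<infinity>"
    "0 < measure lborel (ball t0 \<delta>)"
    using content_ball_pos[OF \<open>0 < \<delta>\<close>] emeasure_bounded_finite[of "ball t0 \<delta>"] by auto
  have "0 < \<pi> t0 / 2" "0 \<le> a"
    using \<open>0 < \<pi> t0\<close> ab by simp_all
  note mass_bounds = posterior_mass_bounds[OF _ \<open>S \<in> sets lborel\<close> b ball this near]
  let ?mass = "\<lambda>c. \<integral>\<theta>. indicator S \<theta> * posterior c \<theta> \<partial>lborel"
  define C where "C = (\<integral>\<theta>. \<pi> \<theta> \<partial>lborel) / (\<pi> t0 / 2 * measure lborel (ball t0 \<delta>))"
  have "\<forall>\<^sub>F c in at_right 0. 0 \<le> ?mass c \<and> ?mass c \<le> f (b / c) / f (a / c) * C"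
    using mass_bounds unfolding C_def by (auto intro: eventually_mono[OF eventually_at_right_less])
  then have "\<forall>\<^sub>F c in at_right 0. 0 \<le> ?mass c" "\<forall>\<^sub>F c in at_right 0. ?mass c \<le> f (b / c) / f (a / c) * C"
    unfolding eventually_conj_iff by blast+
  moreover have "((\<lambda>c. f (b / c) / f (a / c) * C) \<longlongrightarrow> 0) (at_right 0)"
    by (intro tendsto_mult_left_zero tail_ratio_tendsto_0_at_right[OF f_tail ab])
  ultimately show ?thesis
    by (rule tendsto_sandwich[OF _ _ tendsto_const])
qed

end

theorem proposition2:
  fixes Y :: "real^'k" and X :: "real^'p^'k" and W :: "real^'k^'k"
    and f :: "real \<Rightarrow> real" and \<pi>\<theta> :: "real^'p \<Rightarrow> real" and \<epsilon> :: real
  assumes kp: "CARD('k) > CARD('p)"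
    and rankX: "rank X = CARD('p)"
    and W: "sym_posdef W"
    and f_pos: "\<And>u. u \<ge> 0 \<Longrightarrow> f u > 0"
    and f_cont: "continuous_on {0..} f"
    and f_mono: "\<And>u v. 0 \<le> u \<Longrightarrow> u \<le> v \<Longrightarrow> f v \<le> f u"
    and f_tail: "\<And>a. a > 1 \<Longrightarrow> ((\<lambda>u. f (a * u) / f u) \<longlongrightarrow> 0) at_top"
    and pi_cont: "continuous_on UNIV \<pi>\<theta>"
    and pi_nonneg: "\<And>\<theta>. \<pi>\<theta> \<theta> \<ge> 0"
    and pi_int: "integrable lborel \<pi>\<theta>"
    and pi_one: "(\<integral>\<theta>. \<pi>\<theta> \<theta> \<partial>lborel) = 1"
    and pi_pos: "\<pi>\<theta> (theta_W Y X W) > 0"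
    and eps: "\<epsilon> > 0"
  shows "((\<lambda>c. \<integral>\<theta>. indicator (- ball (theta_W Y X W) \<epsilon>) \<theta> * pi_c f \<pi>\<theta> Y X W c \<theta> \<partial>lborel)
           \<longlongrightarrow> 0) (at_right 0)"
proof -
  interpret scaled_posterior f \<pi>\<theta> "Q_W Y X W"
    using f_pos f_cont f_mono pi_cont pi_nonneg pi_int continuous_on_Q_W Q_W_nonneg[OF W]
    by unfold_locales auto
  obtain m where "0 < m" and gap:
    "\<And>\<theta>. \<theta> \<in> - ball (theta_W Y X W) \<epsilon> \<Longrightarrow> Q_W Y X W (theta_W Y X W) + m \<le> Q_W Y X W \<theta>"
    using Q_W_gap_outside_ball[OF rankX W eps] by blast
  have "- ball (theta_W Y X W) \<epsilon> \<in> sets lborel"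
    by simp
  from posterior_mass_tendsto_0[OF f_tail pi_pos this \<open>0 < m\<close> gap]
  show ?thesis
    by (simp add: pi_c_def posterior_def weight_def)
qed

end
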